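(* Let $(f_n)_{n\ge 0}$ be a sequence of positive real numbers such that $\{f_n/f_{n-1}\}_{n\ge1}$ is decreasing, and let $f(a,x)=\sum_{n=0}^{\infty} f_n\frac{(a)_n}{n!}x^n$. Then for $b>a>0$, $\delta>0$ and $x>0$, \[ \frac{\Gamma(a+\delta)\Gamma(b)}{\Gamma(b+\delta)\Gamma(a)}<\frac{f(b+\delta,x)f(a,x)}{f(a+\delta,x)f(b,x)}<1. \]
   Context: $(a)_n=a(a+1)\cdots(a+n-1)$ is the Pochhammer symbol; $\Gamma$ is Euler's gamma function. The inequality is asserted for $x>0$ at which the series converge. *)

theory Defs
  imports "HOL-Analysis.Analysis"
begin

definition hyp_series :: "(nat \<Rightarrow> real) \<Rightarrow> real \<Rightarrow> real \<Rightarrow> nat \<Rightarrow> real" where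
  "hyp_series c a x n = c n * (pochhammer a n / fact n) * x ^ n"

definition hypF :: "(nat \<Rightarrow> real) \<Rightarrow> real \<Rightarrow> real \<Rightarrow> real" where
  "hypF c a x = (\<Sum>n. hyp_series c a x n)"

end

theory Submission
  imports Defs
begin

text \<open>Write u_n(t) = c_n (t)_n/n! x^n for the terms of f(t,x). Both bounds come from a
  Chebyshev-type inequality for series: if q_j p_k \<le> p_j q_k for j < k and g decreases, then
  \<open>\<Sum>q g \<cdot> \<Sum>p \<le> \<Sum>p g \<cdot> \<Sum>q\<close>; it applies to p = u(a), q = u(b) since u_n(b)/u_n(a) = (b)_n/(a)_n
  increases. For the upper bound, Vandermonde's identity gives
  f(t+\<delta>,x) = \<Sum>_l (\<delta>)_l/l! \<Sum>_j u_j(t) c_{j+l} x^l/c_j, and c_{j+l}/c_j decreases in j because the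
  ratios c_{n+1}/c_n do. For the lower bound, u_n(t) \<Gamma>(t+n+\<delta>)/\<Gamma>(t+n) = \<Gamma>(t+\<delta>)/\<Gamma>(t) u_n(t+\<delta>),
  and \<Gamma>(y+\<delta>)/\<Gamma>(y) increases strictly in y since the digamma function does; Chebyshev's inequality
  with g_n = -\<Gamma>(a+n+\<delta>)/\<Gamma>(a+n) then gives the claim.\<close>

text \<open>The correction term, the contribution of the indices 0 and 1, is what makes the upper bound strict.\<close>
lemma suminf_chebyshev:
  fixes p q g :: "nat \<Rightarrow> real"
  assumes g: "\<And>j k. j < k \<Longrightarrow> g k \<le> g j"
    and pq: "\<And>j k. j < k \<Longrightarrow> q j * p k \<le> p j * q k"
    and summable: "summable p" "summable q" "summable (\<lambda>n. p n * g n)" "summable (\<lambda>n. q n * g n)"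
  shows "(\<Sum>n. q n * g n) * (\<Sum>n. p n) + (g 0 - g 1) * (p 0 * q 1 - q 0 * p 1)
     \<le> (\<Sum>n. p n * g n) * (\<Sum>n. q n)"
proof -
  define D where "D N = (\<Sum>j<N. p j * g j) * (\<Sum>j<N. q j) - (\<Sum>j<N. q j * g j) * (\<Sum>j<N. p j)" for N
  have D_Suc: "D (Suc N) = D N + (\<Sum>j<N. (g j - g N) * (p j * q N - q j * p N))" for N
    by (simp add: D_def algebra_simps sum_distrib_left sum_distrib_right sum_subtractf sum.distrib)
  have "0 \<le> (\<Sum>j<N. (g j - g N) * (p j * q N - q j * p N))" for N
    by (intro sum_nonneg mult_nonneg_nonneg) (use g pq in auto)
  then have "incseq D"
    by (intro incseq_SucI) (simp add: D_Suc)
  moreover have "D \<longlonglongrightarrow> (\<Sum>n. p n * g n) * (\<Sum>n. q n) - (\<Sum>n. q n * g n) * (\<Sum>n. p n)"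
    unfolding D_def using summable by (intro tendsto_intros summable_LIMSEQ)
  ultimately have "D 2 \<le> (\<Sum>n. p n * g n) * (\<Sum>n. q n) - (\<Sum>n. q n * g n) * (\<Sum>n. p n)"
    by (intro LIMSEQ_le_const) (auto simp: incseq_def)
  moreover have "D 2 = (g 0 - g 1) * (p 0 * q 1 - q 0 * p 1)"
    by (simp add: D_def numeral_2_eq_2 algebra_simps)
  ultimately show ?thesis by simp
qed

lemma nonneg_diagonal_sums_imp_has_sum_columns:
  fixes T :: "nat \<times> nat \<Rightarrow> real"
  assumes nonneg: "\<And>z. 0 \<le> T z"
    and diagonals: "(\<lambda>n. \<Sum>k\<le>n. T (k, n - k)) sums S"
  shows "\<And>l. (\<lambda>j. T (j, l)) summable_on UNIV"
    and "((\<lambda>l. \<Sum>\<^sub>\<infinity>j. T (j, l)) has_sum S) UNIV"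
proof -
  define F where "F = (\<lambda>(n, k). T (k, n - k))"
  have inner: "((\<lambda>k. F (n, k)) has_sum (\<Sum>k\<le>n. T (k, n - k))) {..n}" for n
    unfolding F_def by simp
  have outer: "((\<lambda>n. \<Sum>k\<le>n. T (k, n - k)) has_sum S) UNIV"
    by (rule sums_nonneg_imp_has_sum[OF diagonals]) (auto intro: sum_nonneg nonneg)
  have "F summable_on Sigma UNIV atMost"
    by (rule summable_on_SigmaI[OF inner has_sum_imp_summable[OF outer]]) (auto simp: F_def nonneg)
  then have "(F has_sum S) (Sigma UNIV atMost)"
    by (rule has_sum_SigmaI[OF inner outer])
  moreover have "((\<lambda>(l, j). T (j, l)) has_sum S) UNIV = (F has_sum S) (Sigma UNIV atMost)"
    by (rule has_sum_reindex_bij_witness[where i = "\<lambda>(n, k). (n - k, k)" and j = "\<lambda>(l, j). (j + l, j)"])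
       (auto simp: F_def)
  ultimately have columns: "((\<lambda>(l, j). T (j, l)) has_sum S) (Sigma UNIV (\<lambda>_. UNIV))"
    by simp
  show column: "(\<lambda>j. T (j, l)) summable_on UNIV" for l
    using summable_on_SigmaD1[of "\<lambda>l j. T (j, l)" UNIV "\<lambda>_. UNIV" l] has_sum_imp_summable[OF columns]
    by (simp add: case_prod_unfold)
  show "((\<lambda>l. \<Sum>\<^sub>\<infinity>j. T (j, l)) has_sum S) UNIV"
    by (rule has_sum_Sigma'[OF columns]) (use column in \<open>auto intro: has_sum_infsum\<close>)
qed

lemma pochhammer_mono_left:
  fixes a b :: real
  assumes "0 < a" "a \<le> b"
  shows "pochhammer a n \<le> pochhammer b n"
proof (induction n)
  case (Suc n)
  then show ?case using assms
    by (auto simp: pochhammer_Suc intro!: mult_mono pochhammer_nonneg)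
qed simp

lemma pochhammer_cross_le:
  fixes a b :: real
  assumes "0 < a" "a \<le> b" "j \<le> k"
  shows "pochhammer b j * pochhammer a k \<le> pochhammer a j * pochhammer b k"
proof -
  obtain m where k: "k = j + m" using assms by (metis le_add_diff_inverse)
  have "pochhammer (a + of_nat j) m \<le> pochhammer (b + of_nat j) m"
    by (rule pochhammer_mono_left) (use assms in auto)
  then have "pochhammer b j * (pochhammer a j * pochhammer (a + of_nat j) m)
     \<le> pochhammer a j * (pochhammer b j * pochhammer (b + of_nat j) m)"
    using assms by (auto intro!: mult_left_mono pochhammer_nonneg mult_nonneg_nonneg
        simp: mult.left_commute[of "pochhammer b j"])
  then show ?thesis unfolding k pochhammer_product' by simp
qed

lemma Gamma_shift_ratio_strict_mono:
  fixes y y' d :: real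
  assumes "0 < y" "y < y'" "0 < d"
  shows "Gamma (y + d) / Gamma y < Gamma (y' + d) / Gamma y'"
proof -
  have "\<exists>\<xi>. y < \<xi> \<and> \<xi> < y' \<and> (ln_Gamma (y' + d) - ln_Gamma y') - (ln_Gamma (y + d) - ln_Gamma y)
      = (y' - y) * (Digamma (\<xi> + d) - Digamma \<xi>)"
    using assms
    by (intro MVT2[of y y' "\<lambda>z. ln_Gamma (z + d) - ln_Gamma z" "\<lambda>z. Digamma (z + d) - Digamma z"]
        derivative_eq_intros impI allI) (auto elim!: nonpos_Ints_cases)
  then obtain \<xi> where \<xi>: "y < \<xi>" "\<xi> < y'" and
    mvt: "(ln_Gamma (y' + d) - ln_Gamma y') - (ln_Gamma (y + d) - ln_Gamma y)
      = (y' - y) * (Digamma (\<xi> + d) - Digamma \<xi>)"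
    by blast
  have "Digamma \<xi> < Digamma (\<xi> + d)"
    using \<xi> assms by (intro Digamma_real_strict_mono) auto
  then have "0 < (y' - y) * (Digamma (\<xi> + d) - Digamma \<xi>)"
    using assms by simp
  with mvt assms \<xi> have "ln (Gamma (y + d)) - ln (Gamma y) < ln (Gamma (y' + d)) - ln (Gamma y')"
    by (simp add: ln_Gamma_real_pos)
  moreover have "Gamma (y + d) > 0" "Gamma y > 0" "Gamma (y' + d) > 0" "Gamma y' > 0"
    using assms by auto
  ultimately have "ln (Gamma (y + d) / Gamma y) < ln (Gamma (y' + d) / Gamma y')"
    by (simp add: ln_div)
  then show ?thesis
    using \<open>Gamma y > 0\<close> \<open>Gamma y' > 0\<close> \<open>Gamma (y + d) > 0\<close> \<open>Gamma (y' + d) > 0\<close>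
    by (subst (asm) ln_less_cancel_iff) auto
qed

definition poch_over_fact :: "real \<Rightarrow> nat \<Rightarrow> real" where
  "poch_over_fact t n = pochhammer t n / fact n"

lemma poch_over_fact_pos: "t > 0 \<Longrightarrow> poch_over_fact t n > 0"
  by (simp add: poch_over_fact_def pochhammer_pos)

lemma pochhammer_add_over_fact:
  fixes t d :: real
  shows "pochhammer (t + d) n / fact n = (\<Sum>k\<le>n. poch_over_fact t k * poch_over_fact d (n - k))"
proof -
  have "pochhammer (t + d) n / fact n
      = (\<Sum>k\<le>n. of_nat (n choose k) * pochhammer t k * pochhammer d (n - k) / fact n)"
    by (simp add: pochhammer_binomial_sum sum_divide_distrib)
  also have "\<dots> = (\<Sum>k\<le>n. poch_over_fact t k * poch_over_fact d (n - k))"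
    by (intro sum.cong refl) (simp add: binomial_fact poch_over_fact_def field_simps)
  finally show ?thesis .
qed

definition hyp_shifted :: "(nat \<Rightarrow> real) \<Rightarrow> real \<Rightarrow> real \<Rightarrow> nat \<Rightarrow> real" where
  "hyp_shifted c t x l = (\<Sum>j. poch_over_fact t j * c (j + l) * x ^ (j + l))"

lemma hyp_series_pos:
  fixes c :: "nat \<Rightarrow> real"
  assumes "\<And>n. c n > 0" "t > 0" "x > 0"
  shows "hyp_series c t x n > 0"
  using assms by (auto simp: hyp_series_def intro!: mult_pos_pos divide_pos_pos pochhammer_pos)

lemma hypF_pos:
  fixes c :: "nat \<Rightarrow> real"
  assumes "\<And>n. c n > 0" "t > 0" "x > 0" "summable (hyp_series c t x)"
  shows "hypF c t x > 0"
  unfolding hypF_def using assms by (intro suminf_pos hyp_series_pos) auto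

lemma hyp_series_cross_le:
  fixes c :: "nat \<Rightarrow> real"
  assumes pos: "\<And>n. c n > 0" and "0 < a" "a \<le> b" "x > 0" "j \<le> k"
  shows "hyp_series c b x j * hyp_series c a x k \<le> hyp_series c a x j * hyp_series c b x k"
proof -
  have "pochhammer b j * pochhammer a k / (fact j * fact k) * (c j * x ^ j * (c k * x ^ k))
      \<le> pochhammer a j * pochhammer b k / (fact j * fact k) * (c j * x ^ j * (c k * x ^ k))"
    using pochhammer_cross_le[OF assms(2,3,5)] pos assms(4)
    by (intro mult_right_mono divide_right_mono) (auto intro!: mult_nonneg_nonneg less_imp_le)
  then show ?thesis by (simp add: hyp_series_def field_simps)
qed

lemma hypF_add_sums_hyp_shifted:
  fixes c :: "nat \<Rightarrow> real" and t d x :: real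
  assumes pos: "\<And>n. c n > 0" and t: "t > 0" and d: "d > 0" and x: "x > 0"
    and summable: "summable (hyp_series c (t + d) x)"
  shows "(\<lambda>l. poch_over_fact d l * hyp_shifted c t x l) sums hypF c (t + d) x"
    and "\<And>l. summable (\<lambda>j. poch_over_fact t j * c (j + l) * x ^ (j + l))"
proof -
  define T where "T = (\<lambda>(j, l). poch_over_fact t j * poch_over_fact d l * c (j + l) * x ^ (j + l))"
  have T_nonneg: "0 \<le> T z" for z
    using pos t d x poch_over_fact_pos by (auto simp: T_def case_prod_unfold intro!: less_imp_le mult_pos_pos)
  have diagonal: "hyp_series c (t + d) x n = (\<Sum>k\<le>n. T (k, n - k))" for n
    unfolding hyp_series_def pochhammer_add_over_fact
    by (simp add: T_def sum_distrib_left sum_distrib_right mult_ac)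
  have "(\<lambda>n. \<Sum>k\<le>n. T (k, n - k)) sums hypF c (t + d) x"
    using summable unfolding hypF_def diagonal[symmetric] by (rule summable_sums)
  note columns = nonneg_diagonal_sums_imp_has_sum_columns[OF T_nonneg this]
  have column_eq: "T (j, l) = poch_over_fact d l * (poch_over_fact t j * c (j + l) * x ^ (j + l))" for j l
    by (simp add: T_def mult_ac)
  show summable_column: "summable (\<lambda>j. poch_over_fact t j * c (j + l) * x ^ (j + l))" for l
  proof -
    have "(\<lambda>j. inverse (poch_over_fact d l) * T (j, l)) summable_on UNIV"
      by (rule summable_on_cmult_right[OF columns(1)])
    then show ?thesis
      using poch_over_fact_pos[OF d, of l] by (intro summable_on_imp_summable) (simp add: column_eq mult.assoc[symmetric])
  qed
  have "(\<Sum>\<^sub>\<infinity>j. T (j, l)) = poch_over_fact d l * hyp_shifted c t x l" for l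
  proof -
    have "0 \<le> poch_over_fact t j * c (j + l) * x ^ (j + l)" for j
      using pos t x poch_over_fact_pos by (auto intro!: less_imp_le mult_pos_pos)
    then have "((\<lambda>j. poch_over_fact t j * c (j + l) * x ^ (j + l)) has_sum hyp_shifted c t x l) UNIV"
      unfolding hyp_shifted_def by (intro sums_nonneg_imp_has_sum summable_sums summable_column)
    then show ?thesis
      by (simp add: column_eq infsumI has_sum_cmult_right)
  qed
  then show "(\<lambda>l. poch_over_fact d l * hyp_shifted c t x l) sums hypF c (t + d) x"
    using has_sum_imp_sums[OF columns(2)] by simp
qed

lemma ratio_shift_antimono:
  fixes c :: "nat \<Rightarrow> real"
  assumes pos: "\<And>n. c n > 0" and ratio: "decseq (\<lambda>n. c (Suc n) / c n)" and "j \<le> k"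
  shows "c (k + l) / c k \<le> c (j + l) / c j"
proof -
  have "c (Suc i + l) / c (Suc i) \<le> c (i + l) / c i" for i
  proof -
    have "c (Suc (i + l)) / c (i + l) \<le> c (Suc i) / c i"
      using decseqD[OF ratio, of i "i + l"] by simp
    then show ?thesis
      using pos[of i] pos[of "Suc i"] pos[of "i + l"] by (simp add: divide_simps mult_ac)
  qed
  then have "decseq (\<lambda>i. c (i + l) / c i)"
    by (intro decseq_SucI)
  then show ?thesis using \<open>j \<le> k\<close> by (simp add: decseq_def)
qed

lemma hyp_shifted_cross_le:
  fixes c :: "nat \<Rightarrow> real"
  assumes pos: "\<And>n. c n > 0" and ratio: "decseq (\<lambda>n. c (Suc n) / c n)"
    and ab: "0 < a" "a < b" and x: "x > 0"
    and summable: "summable (hyp_series c a x)" "summable (hyp_series c b x)"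
      "summable (\<lambda>j. poch_over_fact a j * c (j + l) * x ^ (j + l))"
      "summable (\<lambda>j. poch_over_fact b j * c (j + l) * x ^ (j + l))"
  shows "hyp_shifted c b x l * hypF c a x + (b - a) * x ^ Suc l * (c 1 * c l - c 0 * c (Suc l))
      \<le> hyp_shifted c a x l * hypF c b x"
proof -
  define g where "g j = x ^ l * (c (j + l) / c j)" for j
  have g_antimono: "g k \<le> g j" if "j < k" for j k
    unfolding g_def using that x by (intro mult_left_mono ratio_shift_antimono[OF pos ratio]) auto
  have series_g: "hyp_series c t x j * g j = poch_over_fact t j * c (j + l) * x ^ (j + l)" for t j
    using pos[of j] by (simp add: g_def hyp_series_def poch_over_fact_def power_add field_simps)
  have "(g 0 - g 1) * (hyp_series c a x 0 * hyp_series c b x 1 - hyp_series c b x 0 * hyp_series c a x 1)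
      = (b - a) * x ^ Suc l * (c 1 * c l - c 0 * c (Suc l))"
    using pos[of 0] pos[of 1] by (simp add: g_def hyp_series_def field_simps)
  moreover have "(\<Sum>n. hyp_series c b x n * g n) * (\<Sum>n. hyp_series c a x n)
      + (g 0 - g 1) * (hyp_series c a x 0 * hyp_series c b x 1 - hyp_series c b x 0 * hyp_series c a x 1)
      \<le> (\<Sum>n. hyp_series c a x n * g n) * (\<Sum>n. hyp_series c b x n)"
    using summable(3,4) unfolding series_g[symmetric]
    by (intro suminf_chebyshev g_antimono summable(1,2) hyp_series_cross_le[OF pos]) (use ab x in auto)
  ultimately show ?thesis
    by (simp add: series_g hyp_shifted_def hypF_def)
qed

lemma hypF_cross_upper:
  fixes c :: "nat \<Rightarrow> real"
  assumes pos: "\<And>n. c n > 0" and ratio: "decseq (\<lambda>n. c (Suc n) / c n)"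
    and ratio_strict: "c 2 / c 1 < c 1 / c 0"
    and ab: "0 < a" "a < b" and \<delta>: "\<delta> > 0" and x: "x > 0"
    and summable: "summable (hyp_series c a x)" "summable (hyp_series c b x)"
      "summable (hyp_series c (a + \<delta>) x)" "summable (hyp_series c (b + \<delta>) x)"
  shows "hypF c (b + \<delta>) x * hypF c a x < hypF c (a + \<delta>) x * hypF c b x"
proof -
  note decomp_a = hypF_add_sums_hyp_shifted[OF pos ab(1) \<delta> x summable(3)]
  note decomp_b = hypF_add_sums_hyp_shifted[OF pos _ \<delta> x summable(4)]
  define E where "E l = poch_over_fact \<delta> l * (hyp_shifted c a x l * hypF c b x - hyp_shifted c b x l * hypF c a x)" for l
  have "E sums (hypF c (a + \<delta>) x * hypF c b x - hypF c (b + \<delta>) x * hypF c a x)"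
    unfolding E_def right_diff_distrib mult.assoc[symmetric]
    using ab by (intro sums_diff sums_mult2 decomp_a(1) decomp_b(1)) auto
  moreover have E_ge: "poch_over_fact \<delta> l * ((b - a) * x ^ Suc l * (c 1 * c l - c 0 * c (Suc l))) \<le> E l" for l
  proof -
    have "(b - a) * x ^ Suc l * (c 1 * c l - c 0 * c (Suc l))
        \<le> hyp_shifted c a x l * hypF c b x - hyp_shifted c b x l * hypF c a x"
      using hyp_shifted_cross_le[OF pos ratio _ _ x summable(1,2) decomp_a(2) decomp_b(2), where l = l] ab
      by linarith
    then show ?thesis
      unfolding E_def using poch_over_fact_pos[OF \<delta>, of l] by (intro mult_left_mono) auto
  qed
  moreover have "0 \<le> c 1 * c l - c 0 * c (Suc l)" for l
    using ratio_shift_antimono[OF pos ratio, of 0 l 1] pos[of 0] pos[of l] by (simp add: divide_simps mult_ac)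
  then have "0 \<le> E l" for l
    using E_ge[of l] poch_over_fact_pos[OF \<delta>, of l] ab x
    by (smt (verit) mult_nonneg_nonneg zero_less_power)
  moreover have "0 < E 1"
  proof -
    have "0 < c 1 * c 1 - c 0 * c 2"
      using ratio_strict pos[of 0] pos[of 1] pos[of 2] by (simp add: divide_simps mult_ac)
    then show ?thesis
      using E_ge[of 1] poch_over_fact_pos[OF \<delta>, of 1] ab x
      by (smt (verit) mult_pos_pos numeral_2_eq_2 One_nat_def zero_less_power)
  qed
  ultimately show ?thesis
    using suminf_pos2[of E 1] by (simp add: sums_iff)
qed

lemma hyp_series_Gamma_shift:
  fixes c :: "nat \<Rightarrow> real"
  assumes "t > 0" "d > 0"
  shows "hyp_series c t x n * (Gamma (t + real n + d) / Gamma (t + real n))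
       = Gamma (t + d) / Gamma t * hyp_series c (t + d) x n"
proof -
  have not_nonpos: "t \<notin> \<int>\<^sub>\<le>\<^sub>0" "t + d \<notin> \<int>\<^sub>\<le>\<^sub>0"
    using assms by (auto elim!: nonpos_Ints_cases)
  have "pochhammer t n = Gamma (t + real n) / Gamma t"
    by (rule pochhammer_Gamma[OF not_nonpos(1)])
  moreover have "pochhammer (t + d) n = Gamma (t + real n + d) / Gamma (t + d)"
    using pochhammer_Gamma[OF not_nonpos(2), of n] by (simp add: ac_simps)
  moreover have "Gamma (t + real n) > 0" "Gamma t > 0" "Gamma (t + d) > 0"
    using assms by auto
  ultimately show ?thesis
    by (simp add: hyp_series_def field_simps)
qed

lemma hypF_cross_lower:
  fixes c :: "nat \<Rightarrow> real"
  assumes pos: "\<And>n. c n > 0" and ab: "0 < a" "a < b" and \<delta>: "\<delta> > 0" and x: "x > 0"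
    and summable: "summable (hyp_series c a x)" "summable (hyp_series c b x)"
      "summable (hyp_series c (a + \<delta>) x)" "summable (hyp_series c (b + \<delta>) x)"
  shows "Gamma (a + \<delta>) / Gamma a * hypF c (a + \<delta>) x * hypF c b x
       < Gamma (b + \<delta>) / Gamma b * hypF c (b + \<delta>) x * hypF c a x"
proof -
  define \<psi> where "\<psi> t n = Gamma (t + real n + \<delta>) / Gamma (t + real n)" for t n
  have sums_\<psi>: "(\<lambda>n. hyp_series c t x n * \<psi> t n) sums (Gamma (t + \<delta>) / Gamma t * hypF c (t + \<delta>) x)"
    if "t > 0" "summable (hyp_series c (t + \<delta>) x)" for t
    unfolding \<psi>_def hyp_series_Gamma_shift[OF that(1) \<delta>] hypF_def
    using that(2) by (intro sums_mult summable_sums)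
  note sums_a = sums_\<psi>[OF ab(1) summable(3)]
  have sums_b: "(\<lambda>n. hyp_series c b x n * \<psi> b n) sums (Gamma (b + \<delta>) / Gamma b * hypF c (b + \<delta>) x)"
    using ab summable(4) by (intro sums_\<psi>) auto
  have \<psi>_less: "\<psi> a n < \<psi> b n" for n
    unfolding \<psi>_def using Gamma_shift_ratio_strict_mono[of "a + real n" "b + real n" \<delta>] ab \<delta> by simp
  have \<psi>_mono: "\<psi> a j \<le> \<psi> a k" if "j < k" for j k
    unfolding \<psi>_def using Gamma_shift_ratio_strict_mono[of "a + real j" "a + real k" \<delta>] ab \<delta> that by simp
  have u_b_pos: "hyp_series c b x n > 0" for n
    using pos ab x by (intro hyp_series_pos) auto
  have b_less: "hyp_series c b x n * \<psi> a n < hyp_series c b x n * \<psi> b n" for n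
    using u_b_pos[of n] \<psi>_less[of n] by simp
  have summable_ba: "summable (\<lambda>n. hyp_series c b x n * \<psi> a n)"
  proof (rule summable_comparison_test'[OF sums_summable[OF sums_b]])
    show "norm (hyp_series c b x n * \<psi> a n) \<le> hyp_series c b x n * \<psi> b n" for n
      using u_b_pos[of n] b_less[of n] ab \<delta> by (simp add: \<psi>_def)
  qed
  have cross: "hyp_series c b x j * hyp_series c a x k \<le> hyp_series c a x j * hyp_series c b x k"
    if "j < k" for j k
    using hyp_series_cross_le[OF pos ab(1) _ x] ab that by simp
  have "(\<Sum>n. hyp_series c b x n * - \<psi> a n) * (\<Sum>n. hyp_series c a x n)
      + (- \<psi> a 0 - - \<psi> a 1) * (hyp_series c a x 0 * hyp_series c b x 1 - hyp_series c b x 0 * hyp_series c a x 1)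
      \<le> (\<Sum>n. hyp_series c a x n * - \<psi> a n) * (\<Sum>n. hyp_series c b x n)"
    using summable(1,2) summable_ba sums_summable[OF sums_a] \<psi>_mono
    by (intro suminf_chebyshev cross) (simp_all add: summable_minus_iff)
  moreover have "0 \<le> (- \<psi> a 0 - - \<psi> a 1)
      * (hyp_series c a x 0 * hyp_series c b x 1 - hyp_series c b x 0 * hyp_series c a x 1)"
    using \<psi>_mono[of 0 1] cross[of 0 1] by (intro mult_nonneg_nonneg) auto
  ultimately have "(\<Sum>n. hyp_series c a x n * \<psi> a n) * hypF c b x
      \<le> (\<Sum>n. hyp_series c b x n * \<psi> a n) * hypF c a x"
    unfolding hypF_def mult_minus_right suminf_minus[OF summable_ba] suminf_minus[OF sums_summable[OF sums_a]]
    by linarith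
  also have "\<dots> < (\<Sum>n. hyp_series c b x n * \<psi> b n) * hypF c a x"
  proof -
    have "0 < (\<Sum>n. hyp_series c b x n * \<psi> b n - hyp_series c b x n * \<psi> a n)"
      using b_less by (intro suminf_pos summable_diff sums_summable[OF sums_b] summable_ba) simp
    then show ?thesis
      using suminf_diff[OF sums_summable[OF sums_b] summable_ba] hypF_pos[OF pos ab(1) x summable(1)]
      by (simp add: mult_strict_right_mono)
  qed
  finally show ?thesis
    unfolding sums_unique[OF sums_a, symmetric] sums_unique[OF sums_b, symmetric] .
qed

theorem corollary1:
  fixes c :: "nat \<Rightarrow> real" and a b \<delta> x :: real
  assumes pos: "\<And>n. c n > 0"
    and decr: "\<And>n. n \<ge> 1 \<Longrightarrow> c (n + 1) / c n < c n / c (n - 1)"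
    and ab: "b > a" "a > 0" and \<delta>: "\<delta> > 0" and x: "x > 0"
    and conv: "summable (hyp_series c a x)" "summable (hyp_series c b x)"
      "summable (hyp_series c (a + \<delta>) x)" "summable (hyp_series c (b + \<delta>) x)"
  shows "Gamma (a + \<delta>) * Gamma b / (Gamma (b + \<delta>) * Gamma a)
           < hypF c (b + \<delta>) x * hypF c a x / (hypF c (a + \<delta>) x * hypF c b x)
         \<and> hypF c (b + \<delta>) x * hypF c a x / (hypF c (a + \<delta>) x * hypF c b x) < 1"
proof -
  have ratio: "decseq (\<lambda>n. c (Suc n) / c n)"
    using decr[of "Suc n" for n] by (intro decseq_SucI less_imp_le) simp
  have ratio_strict: "c 2 / c 1 < c 1 / c 0"
    using decr[of 1] by (simp add: numeral_2_eq_2)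
  have F_pos: "hypF c a x > 0" "hypF c b x > 0" "hypF c (a + \<delta>) x > 0" "hypF c (b + \<delta>) x > 0"
    using ab \<delta> x conv by (auto intro!: hypF_pos pos)
  have Gamma_pos: "Gamma a > 0" "Gamma b > 0" "Gamma (a + \<delta>) > 0" "Gamma (b + \<delta>) > 0"
    using ab \<delta> by auto
  show ?thesis
    using hypF_cross_lower[OF pos ab(2,1) \<delta> x conv] hypF_cross_upper[OF pos ratio ratio_strict ab(2,1) \<delta> x conv]
      F_pos Gamma_pos
    by (simp add: divide_simps mult_ac)
qed

end
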